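(* Let $P$ be a full-dimensional convex polytope in $\mathbb{R}^d$. Then $$A_P(1) = \lim_{\epsilon\to0^+}\sum_{x\in\mathbb{Z}^d}(\mathbf{1}_P*\mathcal{G}_\epsilon)(x).$$
   Context: $\mathbf{1}_P$ is the indicator function of $P$; $\mathcal{G}_\epsilon(x) := \epsilon^{-d/2}e^{-\pi\|x\|^2/\epsilon}$; $\omega_P(x) := \lim_{r\to0^+}\frac{\mathrm{vol}(B(x,r)\cap P)}{\mathrm{vol}(B(x,r))}$; $A_P(t):=\sum_{x\in\mathbb{Z}^d}\omega_{tP}(x)$, so $A_P(1)=\sum_{x\in\mathbb{Z}^d}\omega_P(x)$. *)

theory Defs
  imports "HOL-Analysis.Analysis"
begin

definition lattice_points :: "(real ^ 'n) set" where
  "lattice_points = {x. \<forall>i. x $ i \<in> \<int>}"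

definition gauss :: "real \<Rightarrow> real ^ 'n \<Rightarrow> real" where
  "gauss \<epsilon> x = \<epsilon> powr (- real CARD('n) / 2) * exp (- pi * norm x ^ 2 / \<epsilon>)"

definition conv_ind_gauss :: "(real ^ 'n) set \<Rightarrow> real \<Rightarrow> real ^ 'n \<Rightarrow> real" where
  "conv_ind_gauss P \<epsilon> x = integral\<^sup>L lborel (\<lambda>y. indicator P y * gauss \<epsilon> (x - y))"

definition solid_angle :: "(real ^ 'n) set \<Rightarrow> real ^ 'n \<Rightarrow> real" where
  "solid_angle P x = Lim (at_right 0)
     (\<lambda>r. measure lebesgue (ball x r \<inter> P) / measure lebesgue (ball x r))"

definition A_P :: "(real ^ 'n) set \<Rightarrow> real \<Rightarrow> real" where
  "A_P P t = (\<Sum>\<^sub>\<infinity>x\<in>lattice_points. solid_angle ((\<lambda>y. t *\<^sub>R y) ` P) x)"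

end

theory Submission
  imports Defs "HOL-Probability.Probability"
begin

text \<open>Write the polytope as an intersection of finitely many halfspaces. Near a point \<open>x\<close>, the
  dilates \<open>(P - x) / s\<close> agree, for small \<open>s > 0\<close>, with the tangent cone \<open>K\<close> of \<open>P\<close> at \<open>x\<close>.
  Dominated convergence therefore gives both \<open>\<omega>\<^sub>P(x) = vol(K \<inter> B) / vol(B)\<close> and, after the
  substitution \<open>y = x + \<surd>\<epsilon> z\<close>, \<open>(\<one>\<^sub>P * G\<^sub>\<epsilon>)(x) \<rightarrow> \<integral>\<^sub>K exp(-\<pi>|z|\<^sup>2) dz\<close>; by the layer-cake
  formula the Gaussian mass of a cone is its solid angle. Finally, if \<open>P \<subseteq> cball 0 R\<close> and
  \<open>\<epsilon> \<le> 1\<close>, then \<open>(\<one>\<^sub>P * G\<^sub>\<epsilon>)(x) \<le> 2\<^bsup>d/2\<^esup> exp(-\<pi> max(0, |x| - R)\<^sup>2 / 2)\<close>, which is summable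
  over the lattice, so the lattice sums converge by dominated convergence as well.\<close>

section \<open>Gaussian integrals\<close>

lemma nn_integral_gaussian_1d:
  assumes "(c::real) > 0"
  shows "(\<integral>\<^sup>+t. ennreal (exp (- c * t\<^sup>2)) \<partial>lborel) = ennreal (sqrt (pi / c))"
proof -
  define \<sigma> where "\<sigma> = sqrt (1 / (2 * c))"
  have "2 * pi * \<sigma>\<^sup>2 = pi / c" "2 * \<sigma>\<^sup>2 = 1 / c"
    using assms by (simp_all add: \<sigma>_def)
  then have density: "exp (- c * t\<^sup>2) = sqrt (pi / c) * normal_density 0 \<sigma> t" for t
    using assms by (simp add: normal_density_def)
  have "(\<integral>\<^sup>+t. ennreal (exp (- c * t\<^sup>2)) \<partial>lborel)
      = ennreal (sqrt (pi / c)) * (\<integral>\<^sup>+t. ennreal (normal_density 0 \<sigma> t) \<partial>lborel)"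
    unfolding density using assms
    by (subst nn_integral_cmult[symmetric]) (auto simp: ennreal_mult)
  also have "(\<integral>\<^sup>+t. ennreal (normal_density 0 \<sigma> t) \<partial>lborel) = 1"
    using assms by (subst nn_integral_eq_integral)
      (auto simp: \<sigma>_def intro!: integrable_normal_density integral_normal_density)
  finally show ?thesis by simp
qed

lemma nn_integral_gaussian:
  assumes "(c::real) > 0"
  shows "(\<integral>\<^sup>+z. ennreal (exp (- c * (norm (z::'a::euclidean_space))\<^sup>2)) \<partial>lborel)
     = ennreal (sqrt (pi / c) ^ DIM('a))"
proof -
  have "(norm z)\<^sup>2 = (\<Sum>b\<in>Basis. (z \<bullet> b)\<^sup>2)" for z :: 'a
    by (simp add: norm_eq_sqrt_inner euclidean_inner[of z z] power2_eq_square sum_nonneg)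
  then have "ennreal (exp (- c * (norm z)\<^sup>2)) = (\<Prod>b\<in>Basis. ennreal (exp (- c * (z \<bullet> b)\<^sup>2)))"
    for z :: 'a
    by (simp add: sum_distrib_left exp_sum prod_ennreal)
  then have "(\<integral>\<^sup>+z. ennreal (exp (- c * (norm (z::'a))\<^sup>2)) \<partial>lborel)
      = (\<Prod>b\<in>(Basis::'a set). \<integral>\<^sup>+t. ennreal (exp (- c * t\<^sup>2)) \<partial>lborel)"
    by (simp only:) (rule nn_integral_lborel_prod; simp)
  then show ?thesis
    using nn_integral_gaussian_1d[OF assms] assms by (simp add: ennreal_power less_imp_le)
qed

lemma integrable_gaussian:
  assumes "(c::real) > 0"
  shows "integrable lborel (\<lambda>z::'a::euclidean_space. exp (- c * (norm z)\<^sup>2))"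
  using nn_integral_gaussian[OF assms, where 'a='a] by (intro integrableI_bounded) auto

lemma integral_gaussian:
  assumes "(c::real) > 0"
  shows "integral\<^sup>L lborel (\<lambda>z::'a::euclidean_space. exp (- c * (norm z)\<^sup>2)) = sqrt (pi / c) ^ DIM('a)"
  using nn_integral_gaussian[OF assms, where 'a='a] assms
  by (subst integral_eq_nn_integral) (auto simp: less_imp_le)

lemma nn_integral_gaussian_layer_cake:
  fixes A :: "'a::euclidean_space set"
  assumes [measurable]: "A \<in> sets borel"
  shows "(\<integral>\<^sup>+z. indicator A z * ennreal (exp (- pi * (norm z)\<^sup>2)) \<partial>lborel)
     = (\<integral>\<^sup>+t. indicator {0<..<1} t * emeasure lborel (A \<inter> ball 0 (sqrt (- ln t / pi))) \<partial>lborel)"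
proof -
  let ?g = "\<lambda>z::'a. exp (- pi * (norm z)\<^sup>2)"
  have level: "t < ?g z \<longleftrightarrow> norm z < sqrt (- ln t / pi)" if "0 < t" for t z
  proof -
    have "t < ?g z \<longleftrightarrow> (norm z)\<^sup>2 < - ln t / pi"
      using that by (subst ln_less_cancel_iff[symmetric]) (auto simp: field_simps)
    then show ?thesis
      using real_sqrt_less_iff[of "(norm z)\<^sup>2"] by simp
  qed
  have "ennreal (?g z) = (\<integral>\<^sup>+t. indicator {0<..<1} t * (if t < ?g z then 1 else 0) \<partial>lborel)" for z
  proof -
    have "(\<integral>\<^sup>+t. indicator {0<..<1} t * (if t < ?g z then 1 else 0) \<partial>lborel)
        = (\<integral>\<^sup>+t. indicator {0<..<?g z} t \<partial>lborel)"
      using order.strict_trans2[of _ "?g z" 1]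
      by (intro nn_integral_cong) (auto split: split_indicator)
    then show ?thesis by (simp add: emeasure_lborel_Ioo)
  qed
  then have "(\<integral>\<^sup>+z. indicator A z * ennreal (?g z) \<partial>lborel)
      = (\<integral>\<^sup>+z. \<integral>\<^sup>+t. indicator A z * (indicator {0<..<1} t * (if t < ?g z then 1 else 0)) \<partial>lborel \<partial>lborel)"
    by (simp add: nn_integral_cmult)
  also have "\<dots> = (\<integral>\<^sup>+t. \<integral>\<^sup>+z. indicator A z * (indicator {0<..<1} t * (if t < ?g z then 1 else 0)) \<partial>lborel \<partial>lborel)"
    by (rule lborel_pair.Fubini') measurable
  also have "\<dots> = (\<integral>\<^sup>+t. indicator {0<..<1} t * emeasure lborel (A \<inter> ball 0 (sqrt (- ln t / pi))) \<partial>lborel)"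
  proof (rule nn_integral_cong)
    fix t :: real
    have "(\<lambda>z. indicator A z * (indicator {0<..<1} t * (if t < ?g z then 1 else 0)))
        = (\<lambda>z. indicator {0<..<1} t * indicator (A \<inter> ball 0 (sqrt (- ln t / pi))) z :: ennreal)"
      using level by (auto simp: fun_eq_iff dist_norm split: split_indicator)
    then show "(\<integral>\<^sup>+z. indicator A z * (indicator {0<..<1} t * (if t < ?g z then 1 else 0)) \<partial>lborel)
        = indicator {0<..<1} t * emeasure lborel (A \<inter> ball 0 (sqrt (- ln t / pi)))"
      by (simp only:) (rule nn_integral_cmult_indicator, measurable)
  qed
  finally show ?thesis .
qed

lemma emeasure_cone_inter_ball:
  fixes K :: "'a::euclidean_space set"
  assumes "cone K" "K \<in> sets borel" "r > 0"
  shows "emeasure lborel (K \<inter> ball 0 r) = ennreal (r ^ DIM('a)) * emeasure lborel (K \<inter> ball 0 1)"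
proof -
  have "K \<inter> ball 0 r = (\<lambda>v. r *\<^sub>R v + 0) ` (K \<inter> ball 0 1)"
  proof safe
    fix y assume "y \<in> K" "y \<in> ball 0 r"
    then have "y = r *\<^sub>R ((1/r) *\<^sub>R y) + 0" "(1/r) *\<^sub>R y \<in> K \<inter> ball 0 1"
      using assms by (auto simp: cone_def dist_norm)
    then show "y \<in> (\<lambda>v. r *\<^sub>R v + 0) ` (K \<inter> ball 0 1)" by blast
  qed (use assms in \<open>auto simp: cone_def dist_norm\<close>)
  then have "emeasure lebesgue (K \<inter> ball 0 r) = \<bar>r\<bar> ^ DIM('a) * emeasure lebesgue (K \<inter> ball 0 1)"
    by (simp only: emeasure_lebesgue_affine)
  with assms show ?thesis by (simp add: emeasure_completion)
qed

lemma nn_integral_gaussian_cone: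
  fixes K :: "'a::euclidean_space set"
  assumes "cone K" "K \<in> sets borel"
  shows "(\<integral>\<^sup>+z. indicator K z * ennreal (exp (- pi * (norm z)\<^sup>2)) \<partial>lborel)
     = emeasure lborel (K \<inter> ball 0 1) *
       (\<integral>\<^sup>+t. indicator {0<..<1} t * ennreal (sqrt (- ln t / pi) ^ DIM('a)) \<partial>lborel)"
proof -
  have "indicator {0<..<1} t * emeasure lborel (K \<inter> ball 0 (sqrt (- ln t / pi)))
      = emeasure lborel (K \<inter> ball 0 1) * (indicator {0<..<1} t * ennreal (sqrt (- ln t / pi) ^ DIM('a)))"
    for t :: real
  proof (cases "t \<in> {0<..<1}")
    case True
    then have "sqrt (- ln t / pi) > 0" by (simp add: divide_neg_pos)
    from emeasure_cone_inter_ball[OF assms this] True show ?thesis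
      by (simp add: ac_simps)
  qed simp
  then have "(\<integral>\<^sup>+z. indicator K z * ennreal (exp (- pi * (norm z)\<^sup>2)) \<partial>lborel)
     = (\<integral>\<^sup>+t. emeasure lborel (K \<inter> ball 0 1) *
          (indicator {0<..<1} t * ennreal (sqrt (- ln t / pi) ^ DIM('a))) \<partial>lborel)"
    by (simp only: nn_integral_gaussian_layer_cake[OF assms(2)])
  also have "\<dots> = emeasure lborel (K \<inter> ball 0 1) *
       (\<integral>\<^sup>+t. indicator {0<..<1} t * ennreal (sqrt (- ln t / pi) ^ DIM('a)) \<partial>lborel)"
    by (rule nn_integral_cmult) measurable
  finally show ?thesis .
qed

lemma integral_gaussian_cone:
  fixes K :: "'a::euclidean_space set"
  assumes "cone K" and [measurable]: "K \<in> sets borel"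
  shows "integral\<^sup>L lborel (\<lambda>z. indicator K z * exp (- pi * (norm z)\<^sup>2))
     = measure lborel (K \<inter> ball 0 1) / measure lborel (ball (0::'a) 1)"
proof -
  define I where "I = (\<integral>\<^sup>+t. indicator {0<..<1} t * ennreal (sqrt (- ln t / pi) ^ DIM('a)) \<partial>lborel)"
  define \<beta> where "\<beta> = measure lborel (ball (0::'a) 1)"
  have \<beta>: "\<beta> > 0" "emeasure lborel (ball (0::'a) 1) = ennreal \<beta>"
    using emeasure_lborel_ball_finite[of "0::'a" 1] by (auto simp: \<beta>_def emeasure_eq_ennreal_measure)
  have "emeasure lborel (K \<inter> ball 0 1) = ennreal (measure lborel (K \<inter> ball (0::'a) 1))"
    using emeasure_mono[of "K \<inter> ball 0 1" "ball (0::'a) 1" lborel] \<beta>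
    by (intro emeasure_eq_ennreal_measure) (auto simp: top_unique)
  moreover have "I = ennreal (1 / \<beta>)"
    \<comment> \<open>the cone \<open>UNIV\<close> has Gaussian mass \<open>1\<close>\<close>
  proof -
    have "ennreal \<beta> * I = 1"
      using nn_integral_gaussian_cone[of "UNIV::'a set"] nn_integral_gaussian[of pi, where 'a='a] \<beta>
      by (simp add: I_def)
    with \<beta> show ?thesis
      by (cases I) (auto simp: ennreal_mult_top field_simps simp flip: ennreal_mult)
  qed
  ultimately have "(\<integral>\<^sup>+z. ennreal (indicator K z * exp (- pi * (norm z)\<^sup>2)) \<partial>lborel)
      = ennreal (measure lborel (K \<inter> ball 0 1) / \<beta>)"
    using nn_integral_gaussian_cone[OF assms] \<beta>
    by (simp add: I_def indicator_mult_ennreal ennreal_mult' divide_inverse)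
  then show ?thesis
    by (subst integral_eq_nn_integral) (auto simp: \<beta>_def)
qed

section \<open>Polyhedra and their tangent cones\<close>

definition halfspace_inter :: "('a::euclidean_space \<times> real) set \<Rightarrow> 'a set" where
  "halfspace_inter S = {y. \<forall>p\<in>S. fst p \<bullet> y \<le> snd p}"

definition tangent_cone :: "('a::euclidean_space \<times> real) set \<Rightarrow> 'a \<Rightarrow> 'a set" where
  "tangent_cone S x =
     {v. x \<in> halfspace_inter S \<and> (\<forall>p\<in>S. fst p \<bullet> x = snd p \<longrightarrow> fst p \<bullet> v \<le> 0)}"

lemma polyhedron_obtains_halfspace_inter:
  fixes P :: "'a::euclidean_space set"
  assumes "polyhedron P"
  obtains S where "finite S" "P = halfspace_inter S"
proof -
  obtain F where F: "finite F" "P = \<Inter> F" "\<And>h. h \<in> F \<Longrightarrow> \<exists>a b. a \<noteq> 0 \<and> h = {x. a \<bullet> x \<le> b}"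
    using assms unfolding polyhedron_def by blast
  then have "\<forall>h\<in>F. \<exists>p. \<forall>y. y \<in> h \<longleftrightarrow> fst p \<bullet> y \<le> snd p" by fastforce
  then obtain f where f: "\<And>h y. h \<in> F \<Longrightarrow> y \<in> h \<longleftrightarrow> fst (f h) \<bullet> y \<le> snd (f h)"
    by metis
  have "P = halfspace_inter (f ` F)"
    unfolding F(2) halfspace_inter_def using f by auto
  with F(1) that show ?thesis by blast
qed

lemma halfspace_inter_borel [measurable]: "finite S \<Longrightarrow> halfspace_inter S \<in> sets borel"
  unfolding halfspace_inter_def by measurable

lemma tangent_cone_borel [measurable]: "finite S \<Longrightarrow> tangent_cone S x \<in> sets borel"
  unfolding tangent_cone_def by measurable

lemma cone_tangent_cone: "cone (tangent_cone S x)"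
  by (auto simp: cone_def tangent_cone_def mult_le_0_iff)

lemma eventually_at_right_affine_le_iff:
  fixes \<alpha> \<beta> b :: real
  shows "eventually (\<lambda>s. \<alpha> + s * \<beta> \<le> b \<longleftrightarrow> \<alpha> \<le> b \<and> (\<alpha> = b \<longrightarrow> \<beta> \<le> 0)) (at_right 0)"
proof -
  have lim: "((\<lambda>s. \<alpha> + s * \<beta>) \<longlongrightarrow> \<alpha>) (at_right 0)"
    by (auto intro!: tendsto_eq_intros)
  consider "\<alpha> < b" | "\<alpha> = b" | "\<alpha> > b" by linarith
  then show ?thesis
  proof cases
    case 1
    from order_tendstoD(2)[OF lim 1] show ?thesis
      by (rule eventually_mono) (use 1 in auto)
  next
    case 2
    from eventually_at_right_less[of 0] show ?thesis
      by (rule eventually_mono) (use 2 in \<open>auto simp: mult_le_0_iff\<close>)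
  next
    case 3
    from order_tendstoD(1)[OF lim 3] show ?thesis
      by (rule eventually_mono) (use 3 in auto)
  qed
qed

lemma eventually_halfspace_inter_iff_tangent_cone:
  assumes "finite S"
  shows "eventually (\<lambda>s. x + s *\<^sub>R v \<in> halfspace_inter S \<longleftrightarrow> v \<in> tangent_cone S x) (at_right 0)"
proof -
  have "eventually (\<lambda>s. \<forall>p\<in>S. fst p \<bullet> x + s * (fst p \<bullet> v) \<le> snd p \<longleftrightarrow>
      fst p \<bullet> x \<le> snd p \<and> (fst p \<bullet> x = snd p \<longrightarrow> fst p \<bullet> v \<le> 0)) (at_right 0)"
    using assms by (intro eventually_ball_finite ballI eventually_at_right_affine_le_iff)
  then show ?thesis
    by eventually_elim (auto simp: tangent_cone_def halfspace_inter_def inner_add_right)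
qed

section \<open>Solid angles as limits of the heat-smoothed indicator\<close>

lemma tendsto_integral_indicator_blowup:
  fixes P K :: "'a::euclidean_space set" and w :: "'a \<Rightarrow> real"
  assumes [measurable]: "P \<in> sets borel" "K \<in> sets borel"
    and w: "integrable lborel w"
    and local: "\<And>v. eventually (\<lambda>s. x + s *\<^sub>R v \<in> P \<longleftrightarrow> v \<in> K) (at_right 0)"
  shows "((\<lambda>s. integral\<^sup>L lborel (\<lambda>v. indicator P (x + s *\<^sub>R v) * w v))
           \<longlongrightarrow> integral\<^sup>L lborel (\<lambda>v. indicator K v * w v)) (at_right 0)"
  unfolding filterlim_at_right_to_top
proof (rule integral_dominated_convergence_at_top[where w = "\<lambda>v. norm (w v)"])
  have [measurable]: "w \<in> borel_measurable lborel"
    using w by (rule borel_measurable_integrable)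
  show "(\<lambda>v. indicator K v * w v) \<in> borel_measurable lborel"
    "(\<lambda>v. indicator P (x + inverse t *\<^sub>R v) * w v) \<in> borel_measurable lborel" for t
    by measurable
  show "integrable lborel (\<lambda>v. norm (w v))"
    using w by (rule integrable_norm)
  show "AE v in lborel. ((\<lambda>t. indicator P (x + inverse t *\<^sub>R v) * w v) \<longlongrightarrow> indicator K v * w v) at_top"
  proof (intro AE_I2 tendsto_eventually)
    fix v
    from filterlim_iff[THEN iffD1, OF filterlim_inverse_at_right_top, rule_format, OF local[of v]]
    show "eventually (\<lambda>t. indicator P (x + inverse t *\<^sub>R v) * w v = indicator K v * w v) at_top"
      by eventually_elim (simp split: split_indicator)
  qed
  show "\<forall>\<^sub>F t in at_top. AE v in lborel. norm (indicator P (x + inverse t *\<^sub>R v) * w v) \<le> norm (w v)"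
    by (intro always_eventually allI AE_I2) (simp split: split_indicator)
qed

lemma measure_ball_inter_eq_integral:
  fixes Q :: "'a::euclidean_space set"
  assumes [measurable]: "Q \<in> sets borel" and "r > 0"
  shows "measure lebesgue (ball x r \<inter> Q)
       = r ^ DIM('a) * integral\<^sup>L lborel (\<lambda>v. indicator Q (x + r *\<^sub>R v) * indicator (ball 0 1) v)"
proof -
  have "ball x r \<inter> Q = (\<lambda>v. r *\<^sub>R v + x) ` (ball 0 1 \<inter> {v. x + r *\<^sub>R v \<in> Q})"
  proof safe
    fix y assume "y \<in> ball x r" "y \<in> Q"
    then have "y = r *\<^sub>R ((1/r) *\<^sub>R (y - x)) + x" "(1/r) *\<^sub>R (y - x) \<in> ball 0 1 \<inter> {v. x + r *\<^sub>R v \<in> Q}"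
      using \<open>r > 0\<close> by (auto simp: dist_norm norm_minus_commute)
    then show "y \<in> (\<lambda>v. r *\<^sub>R v + x) ` (ball 0 1 \<inter> {v. x + r *\<^sub>R v \<in> Q})" by blast
  qed (use \<open>r > 0\<close> in \<open>auto simp: dist_norm add.commute\<close>)
  moreover have "(\<lambda>v. indicator Q (x + r *\<^sub>R v) * indicator (ball 0 1) v) =
      (indicator (ball 0 1 \<inter> {v. x + r *\<^sub>R v \<in> Q}) :: 'a \<Rightarrow> real)"
    by (auto simp: fun_eq_iff split: split_indicator)
  ultimately show ?thesis
    using \<open>r > 0\<close> by (simp add: measure_lebesgue_affine)
qed

lemma solid_angle_halfspace_inter:
  fixes S :: "((real ^ 'n) \<times> real) set"
  assumes "finite S"
  shows "solid_angle (halfspace_inter S) x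
       = measure lborel (tangent_cone S x \<inter> ball 0 1) / measure lborel (ball (0::real ^ 'n) 1)"
proof -
  let ?B = "ball (0::real ^ 'n) 1"
  have "((\<lambda>r. integral\<^sup>L lborel (\<lambda>v. indicator (halfspace_inter S) (x + r *\<^sub>R v) * indicator ?B v))
      \<longlongrightarrow> integral\<^sup>L lborel (\<lambda>v. indicator (tangent_cone S x) v * indicator ?B v :: real)) (at_right 0)"
  proof (rule tendsto_integral_indicator_blowup)
    show "integrable lborel (indicator ?B :: _ \<Rightarrow> real)"
      using emeasure_lborel_ball_finite[of "0::real^'n" 1] by (simp add: less_top)
  qed (use assms eventually_halfspace_inter_iff_tangent_cone in auto)
  then have "((\<lambda>r. integral\<^sup>L lborel (\<lambda>v. indicator (halfspace_inter S) (x + r *\<^sub>R v) * indicator ?B v)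
        / measure lborel ?B)
      \<longlongrightarrow> measure lborel (tangent_cone S x \<inter> ?B) / measure lborel ?B) (at_right 0)"
    by (intro tendsto_divide tendsto_const) (simp_all add: indicator_inter_arith[symmetric])
  moreover have "integral\<^sup>L lborel (\<lambda>v. indicator (halfspace_inter S) (x + r *\<^sub>R v) * indicator ?B v)
        / measure lborel ?B
      = measure lebesgue (ball x r \<inter> halfspace_inter S) / measure lebesgue (ball x r)" if "r > 0" for r
    using measure_ball_inter_eq_integral[OF halfspace_inter_borel[OF assms] that]
      measure_ball_inter_eq_integral[of UNIV r x] that
    by (simp add: indicator_inter_arith[symmetric])
  ultimately have "((\<lambda>r. measure lebesgue (ball x r \<inter> halfspace_inter S) / measure lebesgue (ball x r))
      \<longlongrightarrow> measure lborel (tangent_cone S x \<inter> ?B) / measure lborel ?B) (at_right 0)"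
    by (rule Lim_transform_eventually[OF _ eventually_at_right_less[THEN eventually_mono]]) auto
  then show ?thesis
    unfolding solid_angle_def by (intro tendsto_Lim) auto
qed

lemma conv_ind_gauss_rescaled:
  fixes P :: "(real ^ 'n) set"
  assumes [measurable]: "P \<in> sets borel" and "\<epsilon> > 0"
  shows "conv_ind_gauss P \<epsilon> x
       = integral\<^sup>L lborel (\<lambda>z. indicator P (x + sqrt \<epsilon> *\<^sub>R z) * exp (- pi * (norm z)\<^sup>2))"
proof -
  let ?c = "sqrt \<epsilon>" and ?f = "\<lambda>y. indicator P y * gauss \<epsilon> (x - y)"
  have [measurable]: "?f \<in> borel_measurable borel"
    unfolding gauss_def by measurable
  have scale: "\<bar>?c\<bar> ^ CARD('n) * \<epsilon> powr (- real CARD('n) / 2) = 1"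
    using \<open>\<epsilon> > 0\<close> by (simp add: powr_half_sqrt[symmetric] powr_power flip: powr_add)
  have "conv_ind_gauss P \<epsilon> x
      = integral\<^sup>L (density (distr lborel borel (\<lambda>z. x + ?c *\<^sub>R z)) (\<lambda>_. \<bar>?c\<bar> ^ CARD('n))) ?f"
    unfolding conv_ind_gauss_def using \<open>\<epsilon> > 0\<close> by (subst lborel_affine[of ?c x]) auto
  also have "\<dots> = integral\<^sup>L lborel (\<lambda>z. \<bar>?c\<bar> ^ CARD('n) * ?f (x + ?c *\<^sub>R z))"
    by (subst integral_density) (auto simp: integral_distr)
  also have "\<dots> = integral\<^sup>L lborel (\<lambda>z. indicator P (x + ?c *\<^sub>R z) * exp (- pi * (norm z)\<^sup>2))"
    using \<open>\<epsilon> > 0\<close> scale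
    by (intro Bochner_Integration.integral_cong) (simp_all add: gauss_def power_mult_distrib)
  finally show ?thesis .
qed

lemma filterlim_sqrt_at_right_0: "filterlim sqrt (at_right 0) (at_right 0)"
proof (rule tendsto_imp_filterlim_at_right)
  have "((\<lambda>x. sqrt x) \<longlongrightarrow> sqrt 0) (at_right 0)"
    by (intro tendsto_intros)
  then show "(sqrt \<longlongrightarrow> 0) (at_right 0)"
    by simp
qed (simp add: eventually_at_right_less eventually_mono)

lemma tendsto_conv_ind_gauss_halfspace_inter:
  fixes S :: "((real ^ 'n) \<times> real) set"
  assumes "finite S"
  shows "((\<lambda>\<epsilon>. conv_ind_gauss (halfspace_inter S) \<epsilon> x) \<longlongrightarrow>
     measure lborel (tangent_cone S x \<inter> ball 0 1) / measure lborel (ball (0::real ^ 'n) 1)) (at_right 0)"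
proof -
  let ?g = "\<lambda>z::real ^ 'n. exp (- pi * (norm z)\<^sup>2)"
  have "((\<lambda>s. integral\<^sup>L lborel (\<lambda>z. indicator (halfspace_inter S) (x + s *\<^sub>R z) * ?g z))
      \<longlongrightarrow> integral\<^sup>L lborel (\<lambda>z. indicator (tangent_cone S x) z * ?g z)) (at_right 0)"
    using assms by (intro tendsto_integral_indicator_blowup integrable_gaussian
        eventually_halfspace_inter_iff_tangent_cone) auto
  from filterlim_compose[OF this filterlim_sqrt_at_right_0]
  have "((\<lambda>\<epsilon>. integral\<^sup>L lborel (\<lambda>z. indicator (halfspace_inter S) (x + sqrt \<epsilon> *\<^sub>R z) * ?g z))
      \<longlongrightarrow> measure lborel (tangent_cone S x \<inter> ball 0 1) / measure lborel (ball (0::real ^ 'n) 1))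
      (at_right 0)"
    by (simp only: integral_gaussian_cone[OF cone_tangent_cone tangent_cone_borel[OF assms]])
  then show ?thesis
    by (rule Lim_transform_eventually[OF _ eventually_at_right_less[THEN eventually_mono]])
      (simp add: conv_ind_gauss_rescaled assms)
qed

lemma tendsto_conv_ind_gauss_solid_angle:
  fixes P :: "(real ^ 'n) set"
  assumes "polyhedron P"
  shows "((\<lambda>\<epsilon>. conv_ind_gauss P \<epsilon> x) \<longlongrightarrow> solid_angle P x) (at_right 0)"
proof -
  obtain S where "finite S" "P = halfspace_inter S"
    using assms by (rule polyhedron_obtains_halfspace_inter)
  then show ?thesis
    by (simp add: tendsto_conv_ind_gauss_halfspace_inter solid_angle_halfspace_inter)
qed

lemma conv_ind_gauss_le:
  fixes P :: "(real ^ 'n) set"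
  assumes [measurable]: "P \<in> sets borel" and "P \<subseteq> cball 0 R" and "\<epsilon> > 0"
  shows "conv_ind_gauss P \<epsilon> x \<le> sqrt 2 ^ CARD('n) * exp (- (pi / (2 * \<epsilon>)) * (max 0 (norm x - R))\<^sup>2)"
proof -
  define D where "D = max 0 (norm x - R)"
  let ?g = "\<lambda>c z. exp (- c * (norm (z::real ^ 'n))\<^sup>2)"
  have "indicator P (x + sqrt \<epsilon> *\<^sub>R z) * ?g pi z \<le> exp (- pi / (2 * \<epsilon>) * D\<^sup>2) * ?g (pi / 2) z" for z
  proof (cases "x + sqrt \<epsilon> *\<^sub>R z \<in> P")
    case True
    then have "norm x \<le> R + sqrt \<epsilon> * norm z"
      using assms norm_triangle_ineq4[of "x + sqrt \<epsilon> *\<^sub>R z" "sqrt \<epsilon> *\<^sub>R z"] by auto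
    then have "D\<^sup>2 \<le> (sqrt \<epsilon> * norm z)\<^sup>2"
      unfolding D_def using \<open>\<epsilon> > 0\<close> by (intro power_mono) auto
    then have "pi * D\<^sup>2 \<le> pi * (\<epsilon> * (norm z)\<^sup>2)"
      using \<open>\<epsilon> > 0\<close> by (simp add: power_mult_distrib)
    then have "- pi * (norm z)\<^sup>2 \<le> - pi / (2 * \<epsilon>) * D\<^sup>2 + - (pi / 2) * (norm z)\<^sup>2"
      using \<open>\<epsilon> > 0\<close> by (simp add: field_simps)
    with True show ?thesis by (simp flip: exp_add)
  qed simp
  then have "conv_ind_gauss P \<epsilon> x \<le> integral\<^sup>L lborel (\<lambda>z. exp (- pi / (2 * \<epsilon>) * D\<^sup>2) * ?g (pi / 2) z)"
    unfolding conv_ind_gauss_rescaled[OF assms(1) \<open>\<epsilon> > 0\<close>]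
    by (intro integral_mono integrable_mult_right integrable_gaussian
        Bochner_Integration.integrable_bound[OF integrable_gaussian[of pi]])
      (auto split: split_indicator)
  also have "\<dots> = exp (- pi / (2 * \<epsilon>) * D\<^sup>2) * sqrt (pi / (pi / 2)) ^ DIM(real ^ 'n)"
    by (simp only: integral_mult_right_zero integral_gaussian[OF pi_half_gt_zero])
  finally show ?thesis
    by (simp add: D_def mult.commute)
qed

lemma conv_ind_gauss_nonneg: "0 \<le> conv_ind_gauss P \<epsilon> x"
  unfolding conv_ind_gauss_def gauss_def by (intro Bochner_Integration.integral_nonneg) auto

section \<open>Lattice sums\<close>

lemma summable_on_int_gaussian:
  assumes "(c::real) > 0"
  shows "(\<lambda>k::int. exp (- c * (of_int k)\<^sup>2)) summable_on UNIV"
proof -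
  let ?h = "\<lambda>k::int. exp (- c * (of_int k)\<^sup>2)"
  have "(\<lambda>n::nat. exp (- c) ^ n) summable_on UNIV"
    using assms by (subst summable_on_UNIV_nonneg_real_iff) (auto intro: summable_geometric)
  moreover have "exp (- c * (real n)\<^sup>2) \<le> exp (- c) ^ n" for n :: nat
    using assms by (simp flip: exp_of_nat_mult) (simp add: power2_eq_square le_square)
  ultimately have "(\<lambda>n::nat. exp (- c * (real n)\<^sup>2)) summable_on UNIV"
    by (rule summable_on_comparison_test) auto
  then have "?h summable_on range int" "?h summable_on range (\<lambda>n. - int n)"
    by (subst summable_on_reindex; simp add: o_def inj_on_def)+
  then have "?h summable_on (range int \<union> range (\<lambda>n. - int n))"
    by (rule summable_on_union)
  also have "range int \<union> range (\<lambda>n. - int n) = UNIV"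
    by (auto intro: int_cases2)
  finally show ?thesis .
qed

lemma summable_on_prod_PiE_nonneg:
  fixes h :: "'i \<Rightarrow> 'b \<Rightarrow> real"
  assumes "finite I" "\<And>i. i \<in> I \<Longrightarrow> h i summable_on B i"
    and "\<And>i b. i \<in> I \<Longrightarrow> b \<in> B i \<Longrightarrow> h i b \<ge> 0"
  shows "(\<lambda>g. \<Prod>i\<in>I. h i (g i)) summable_on PiE I B"
proof (rule nonneg_bdd_above_summable_on)
  show "bdd_above (sum (\<lambda>g. \<Prod>i\<in>I. h i (g i)) ` {F. F \<subseteq> PiE I B \<and> finite F})"
  proof (rule bdd_aboveI[where M = "\<Prod>i\<in>I. infsum (h i) (B i)"], safe)
    fix F assume F: "F \<subseteq> PiE I B" "finite F"
    define G where "G i = (\<lambda>g. g i) ` F" for i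
    have G: "finite (G i)" "G i \<subseteq> B i" if "i \<in> I" for i
      using F that by (auto simp: G_def)
    have nonneg: "h i b \<ge> 0" if "i \<in> I" "b \<in> G i" for i b
      using that G(2) assms(3) by blast
    have "F \<subseteq> PiE I G"
      using F by (auto simp: G_def PiE_iff)
    then have "(\<Sum>g\<in>F. \<Prod>i\<in>I. h i (g i)) \<le> (\<Sum>g\<in>PiE I G. \<Prod>i\<in>I. h i (g i))"
      using assms G by (intro sum_mono2 finite_PiE prod_nonneg) (auto intro: nonneg PiE_mem)
    also have "\<dots> = (\<Prod>i\<in>I. \<Sum>b\<in>G i. h i b)"
      using assms G by (simp add: prod_sum_PiE)
    also have "\<dots> \<le> (\<Prod>i\<in>I. infsum (h i) (B i))"
      using assms G nonneg by (intro prod_mono conjI sum_nonneg finite_sum_le_infsum) auto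
    finally show "(\<Sum>g\<in>F. \<Prod>i\<in>I. h i (g i)) \<le> (\<Prod>i\<in>I. infsum (h i) (B i))" .
  qed
qed (use assms in \<open>auto simp: PiE_iff intro: prod_nonneg\<close>)

lemma lattice_points_eq_range_of_int: "lattice_points = range (\<lambda>k. \<chi> i. of_int (k i))"
proof safe
  fix x :: "real ^ 'n" assume "x \<in> lattice_points"
  then have "x = (\<chi> i. of_int \<lfloor>x $ i\<rfloor>)"
    by (auto simp: lattice_points_def vec_eq_iff elim!: Ints_cases)
  then show "x \<in> range (\<lambda>k. \<chi> i. of_int (k i))" by (metis rangeI)
qed (simp add: lattice_points_def)

lemma summable_on_lattice_gaussian:
  assumes "(c::real) > 0"
  shows "(\<lambda>x::real ^ 'n. exp (- c * (norm x)\<^sup>2)) summable_on lattice_points"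
proof -
  have "(\<lambda>k. \<Prod>i\<in>UNIV. exp (- c * (of_int (k i))\<^sup>2)) summable_on PiE (UNIV :: 'n set) (\<lambda>_. UNIV)"
    using assms by (intro summable_on_prod_PiE_nonneg summable_on_int_gaussian) auto
  moreover have "(norm x)\<^sup>2 = (\<Sum>i\<in>UNIV. (x $ i)\<^sup>2)" for x :: "real ^ 'n"
    unfolding power2_norm_eq_inner inner_vec_def by (simp add: power2_eq_square)
  then have "exp (- c * (norm (\<chi> i. of_int (k i) :: real ^ 'n))\<^sup>2)
      = (\<Prod>i\<in>UNIV. exp (- c * (of_int (k i))\<^sup>2))" for k :: "'n \<Rightarrow> int"
    by (simp add: sum_distrib_left exp_sum)
  moreover have "inj (\<lambda>k. \<chi> i. of_int (k i) :: real ^ 'n)"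
    by (auto simp: inj_def vec_eq_iff)
  ultimately show ?thesis
    by (simp add: lattice_points_eq_range_of_int summable_on_reindex o_def)
qed

lemma sq_max_0_diff_ge:
  assumes "(n::real) \<ge> 0"
  shows "n\<^sup>2 / 2 - R\<^sup>2 \<le> (max 0 (n - R))\<^sup>2"
proof (cases "n \<ge> R")
  case True
  have "(n - R)\<^sup>2 - (n\<^sup>2 / 2 - R\<^sup>2) = (n - 2 * R)\<^sup>2 / 2"
    by (simp add: power2_eq_square field_simps)
  moreover have "(max 0 (n - R))\<^sup>2 = (n - R)\<^sup>2"
    using True by simp
  ultimately show ?thesis
    using zero_le_power2[of "n - 2 * R"] by linarith
next
  case False
  with assms have "n\<^sup>2 \<le> R\<^sup>2" by (intro power_mono) auto
  moreover have "(max 0 (n - R))\<^sup>2 = 0"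
    using False by simp
  moreover have "0 \<le> R\<^sup>2" by simp
  ultimately show ?thesis by linarith
qed

lemma summable_on_lattice_gaussian_outside_ball:
  assumes "(c::real) > 0"
  shows "(\<lambda>x::real ^ 'n. exp (- c * (max 0 (norm x - R))\<^sup>2)) summable_on lattice_points"
proof (rule summable_on_comparison_test)
  show "(\<lambda>x::real ^ 'n. exp (c * R\<^sup>2) * exp (- (c / 2) * (norm x)\<^sup>2)) summable_on lattice_points"
    using assms by (intro summable_on_cmult_right summable_on_lattice_gaussian) simp
  fix x :: "real ^ 'n"
  have "c * ((norm x)\<^sup>2 / 2 - R\<^sup>2) \<le> c * (max 0 (norm x - R))\<^sup>2"
    using assms sq_max_0_diff_ge[of "norm x" R] by (intro mult_left_mono) auto
  then show "exp (- c * (max 0 (norm x - R))\<^sup>2) \<le> exp (c * R\<^sup>2) * exp (- (c / 2) * (norm x)\<^sup>2)"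
    by (simp add: field_simps flip: exp_add)
qed simp

lemma infsum_eq_integral_count_space:
  fixes f :: "'a \<Rightarrow> real"
  assumes "integrable (count_space A) f"
  shows "infsum f A = integral\<^sup>L (count_space A) f"
  using assms infsetsum_infsum[of f A] by (simp add: abs_summable_on_def infsetsum_def)

lemma tendsto_infsum_dominated:
  fixes f :: "real \<Rightarrow> 'a \<Rightarrow> real"
  assumes lim: "\<And>x. x \<in> A \<Longrightarrow> ((\<lambda>t. f t x) \<longlongrightarrow> g x) (at_right 0)"
    and bound: "eventually (\<lambda>t. \<forall>x\<in>A. \<bar>f t x\<bar> \<le> B x) (at_right 0)"
    and "B summable_on A"
  shows "((\<lambda>t. infsum (f t) A) \<longlongrightarrow> infsum g A) (at_right 0)"
proof -
  obtain t where "\<forall>x\<in>A. \<bar>f t x\<bar> \<le> B x"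
    using eventually_happens'[OF _ bound] by auto
  then have "(\<lambda>x. norm (B x)) summable_on A"
    using summable_on_cong[of A "\<lambda>x. norm (B x)" B] \<open>B summable_on A\<close> by force
  then have B: "integrable (count_space A) B"
    using abs_summable_equivalent[of B A] by (simp add: abs_summable_on_def)
  have lim': "AE x in count_space A. ((\<lambda>s. f (inverse s) x) \<longlongrightarrow> g x) at_top"
    using lim by (simp add: AE_count_space filterlim_at_right_to_top)
  have bound': "\<forall>\<^sub>F s in at_top. AE x in count_space A. norm (f (inverse s) x) \<le> B x"
    using bound by (simp add: AE_count_space eventually_at_right_to_top)
  have f: "integrable (count_space A) (f t)" if "\<forall>x\<in>A. \<bar>f t x\<bar> \<le> B x" for t
    using that by (intro Bochner_Integration.integrable_bound[OF B]) (auto simp: AE_count_space)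
  have "eventually (\<lambda>t. integral\<^sup>L (count_space A) (f t) = infsum (f t) A) (at_right 0)"
    using bound by (rule eventually_mono) (simp add: infsum_eq_integral_count_space f)
  moreover have "integrable (count_space A) g"
    by (rule integrable_dominated_convergence_at_top[OF _ _ B lim' bound']) auto
  moreover have "((\<lambda>t. integral\<^sup>L (count_space A) (f t)) \<longlongrightarrow> integral\<^sup>L (count_space A) g) (at_right 0)"
    unfolding filterlim_at_right_to_top
    by (rule integral_dominated_convergence_at_top[OF _ _ B lim' bound']) auto
  ultimately show ?thesis
    by (simp add: infsum_eq_integral_count_space Lim_transform_eventually)
qed

lemma summable_on_lattice_conv_ind_gauss:
  fixes P :: "(real ^ 'n) set"
  assumes "P \<in> sets borel" "P \<subseteq> cball 0 R" "\<epsilon> > 0"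
  shows "conv_ind_gauss P \<epsilon> summable_on lattice_points"
proof (rule summable_on_comparison_test)
  show "(\<lambda>x. sqrt 2 ^ CARD('n) * exp (- (pi / (2 * \<epsilon>)) * (max 0 (norm x - R))\<^sup>2))
      summable_on lattice_points"
    using assms by (intro summable_on_cmult_right summable_on_lattice_gaussian_outside_ball) simp
qed (use conv_ind_gauss_le[OF assms] conv_ind_gauss_nonneg in auto)

lemma eventually_conv_ind_gauss_dominated:
  fixes P :: "(real ^ 'n) set"
  assumes "P \<in> sets borel" "P \<subseteq> cball 0 R"
  shows "eventually (\<lambda>\<epsilon>. \<forall>x\<in>lattice_points. \<bar>conv_ind_gauss P \<epsilon> x\<bar>
           \<le> sqrt 2 ^ CARD('n) * exp (- (pi / 2) * (max 0 (norm x - R))\<^sup>2)) (at_right 0)"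
  unfolding eventually_at_right_field
proof (intro exI[of _ 1] conjI allI impI ballI)
  fix \<epsilon> :: real and x :: "real ^ 'n"
  assume "0 < \<epsilon>" "\<epsilon> < 1"
  let ?D = "(max 0 (norm x - R))\<^sup>2"
  have "- (pi / (2 * \<epsilon>)) * ?D \<le> - (pi / 2) * ?D"
    using \<open>0 < \<epsilon>\<close> \<open>\<epsilon> < 1\<close> mult_right_mono[of \<epsilon> 1 ?D] by (simp add: field_simps)
  then have "sqrt 2 ^ CARD('n) * exp (- (pi / (2 * \<epsilon>)) * ?D) \<le> sqrt 2 ^ CARD('n) * exp (- (pi / 2) * ?D)"
    by (intro mult_left_mono) auto
  then show "\<bar>conv_ind_gauss P \<epsilon> x\<bar> \<le> sqrt 2 ^ CARD('n) * exp (- (pi / 2) * ?D)"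
    using conv_ind_gauss_le[OF assms \<open>0 < \<epsilon>\<close>, of x] conv_ind_gauss_nonneg[of P \<epsilon> x]
    by (metis abs_of_nonneg order.trans)
qed simp

text \<open>The argument does not use that \<open>P\<close> is full-dimensional.\<close>

theorem theorem4p2:
  fixes P :: "(real ^ 'n) set"
  assumes "polytope P"
    and "aff_dim P = int CARD('n)"
  shows "(\<forall>\<epsilon>>0. (conv_ind_gauss P \<epsilon>) summable_on lattice_points)
    \<and> ((\<lambda>\<epsilon>. \<Sum>\<^sub>\<infinity>x\<in>lattice_points. conv_ind_gauss P \<epsilon> x) \<longlongrightarrow> A_P P 1) (at_right 0)"
proof -
  have P: "P \<in> sets borel"
    using polytope_imp_compact[OF assms(1)] by (simp add: compact_imp_closed)
  obtain R where R: "P \<subseteq> cball 0 R"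
    using polytope_imp_bounded[OF assms(1)] unfolding bounded_pos by (metis mem_cball_0 subsetI)
  have "((\<lambda>\<epsilon>. \<Sum>\<^sub>\<infinity>x\<in>lattice_points. conv_ind_gauss P \<epsilon> x)
      \<longlongrightarrow> (\<Sum>\<^sub>\<infinity>x\<in>lattice_points. solid_angle P x)) (at_right 0)"
  proof (rule tendsto_infsum_dominated[OF _ eventually_conv_ind_gauss_dominated[OF P R]])
    show "((\<lambda>\<epsilon>. conv_ind_gauss P \<epsilon> x) \<longlongrightarrow> solid_angle P x) (at_right 0)" for x
      using assms(1) by (intro tendsto_conv_ind_gauss_solid_angle polytope_imp_polyhedron)
  qed (intro summable_on_cmult_right summable_on_lattice_gaussian_outside_ball; simp)
  then show ?thesis
    using summable_on_lattice_conv_ind_gauss[OF P R] by (simp add: A_P_def)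
qed

end
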